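(* Let $E$ be an effect algebra and $(B,v)$ a unital Abelian po-group. Then there is an isomorphism of generalized effect algebras $$[E,\Gamma(B,v)]\cong[\mathrm{Gr}(E),(B,v)]_{\mathrm{GEA}},$$ natural in both $E$ and $(B,v)$, given (from right to left) by $g\mapsto g\circ\eta_E$.
   Context: An effect algebra is a partial algebra $(E;\oplus,',0,1)$ with $\oplus$ commutative and associative (Kleene identities), $a\oplus b=1$ iff $b=a'$, and $a\oplus1$ defined iff $a=0$. For an Abelian po-group $B$ and $v\in B^+$, $\Gamma(B,v)$ is the interval $\{b:0\le b\le v\}$ as an effect algebra ($a\oplus b=a+b$ defined iff $a+b\le v$, $a'=v-a$). The universal group of $E$ is a unital Abelian po-group $(\mathrm{Gr}(E),u)$ together with an effect algebra homomorphism $\eta_E\colon E\to\Gamma(\mathrm{Gr}(E),u)$ such that every effect algebra homomorphism $E\to\Gamma(B,w)$ factors as $\Gamma(g)\circ\eta_E$ for a unique order-preserving group homomorphism $g\colon\mathrm{Gr}(E)\to B$ with $g(u)=w$ (this holds for any $w\in B^+$). $[E,F]$ denotes the generalized effect algebra of maps $E\to F$ preserving $0$ and existing orthosums, with pointwise partial sum. For unital po-groups $(A,u)$, $(B,v)$, $[A,B]_{\mathrm{GEA}}$ is the set of order-preserving group homomorphisms $g\colon A\to B$ with $g(u)\le v$, made into a generalized effect algebra by $g\perp h$ iff $g(u)+h(u)\le v$, with pointwise sum and the zero map as $0$. *)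

theory Defs
  imports "HOL-Library.FuncSet"
begin

record 'a pa =
  pcarrier :: "'a set"
  pplus    :: "'a \<Rightarrow> 'a \<Rightarrow> 'a option"
  pzero    :: 'a

record 'a ea = "'a pa" +
  ea_compl :: "'a \<Rightarrow> 'a"
  ea_one   :: 'a

text \<open>Effect algebra (E; oplus, ', 0, 1): commutativity and associativity as Kleene identities,
  a oplus b = 1 iff b = a', and a oplus 1 defined iff a = 0.\<close>
definition effect_algebra :: "('a, 'z) ea_scheme \<Rightarrow> bool" where
  "effect_algebra E \<longleftrightarrow>
     pzero E \<in> pcarrier E \<and> ea_one E \<in> pcarrier E \<and>
     (\<forall>a\<in>pcarrier E. ea_compl E a \<in> pcarrier E) \<and>
     (\<forall>a\<in>pcarrier E. \<forall>b\<in>pcarrier E. \<forall>c. pplus E a b = Some c \<longrightarrow> c \<in> pcarrier E) \<and>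
     (\<forall>a\<in>pcarrier E. \<forall>b\<in>pcarrier E. pplus E a b = pplus E b a) \<and>
     (\<forall>a\<in>pcarrier E. \<forall>b\<in>pcarrier E. \<forall>c\<in>pcarrier E.
        Option.bind (pplus E a b) (\<lambda>x. pplus E x c) = Option.bind (pplus E b c) (\<lambda>y. pplus E a y)) \<and>
     (\<forall>a\<in>pcarrier E. \<forall>b\<in>pcarrier E. pplus E a b = Some (ea_one E) \<longleftrightarrow> b = ea_compl E a) \<and>
     (\<forall>a\<in>pcarrier E. pplus E a (ea_one E) \<noteq> None \<longleftrightarrow> a = pzero E)"

definition gea :: "('a, 'z) pa_scheme \<Rightarrow> bool" where
  "gea A \<longleftrightarrow>
     pzero A \<in> pcarrier A \<and>
     (\<forall>a\<in>pcarrier A. \<forall>b\<in>pcarrier A. \<forall>c. pplus A a b = Some c \<longrightarrow> c \<in> pcarrier A) \<and>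
     (\<forall>a\<in>pcarrier A. \<forall>b\<in>pcarrier A. pplus A a b = pplus A b a) \<and>
     (\<forall>a\<in>pcarrier A. \<forall>b\<in>pcarrier A. \<forall>c\<in>pcarrier A.
        Option.bind (pplus A a b) (\<lambda>x. pplus A x c) = Option.bind (pplus A b c) (\<lambda>y. pplus A a y)) \<and>
     (\<forall>a\<in>pcarrier A. pplus A a (pzero A) = Some a) \<and>
     (\<forall>a\<in>pcarrier A. \<forall>b\<in>pcarrier A. \<forall>c\<in>pcarrier A.
        pplus A a b \<noteq> None \<and> pplus A a b = pplus A a c \<longrightarrow> b = c) \<and>
     (\<forall>a\<in>pcarrier A. \<forall>b\<in>pcarrier A. pplus A a b = Some (pzero A) \<longrightarrow> a = pzero A \<and> b = pzero A)"

definition gea_iso :: "('a, 'z) pa_scheme \<Rightarrow> ('b, 'y) pa_scheme \<Rightarrow> ('a \<Rightarrow> 'b) \<Rightarrow> bool" where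
  "gea_iso A A' \<phi> \<longleftrightarrow>
     bij_betw \<phi> (pcarrier A) (pcarrier A') \<and> \<phi> (pzero A) = pzero A' \<and>
     (\<forall>a\<in>pcarrier A. \<forall>b\<in>pcarrier A. pplus A' (\<phi> a) (\<phi> b) = map_option \<phi> (pplus A a b))"

definition ea_morphism :: "('a, 'z) ea_scheme \<Rightarrow> ('b, 'y) ea_scheme \<Rightarrow> ('a \<Rightarrow> 'b) \<Rightarrow> bool" where
  "ea_morphism E F \<phi> \<longleftrightarrow>
     (\<forall>a\<in>pcarrier E. \<phi> a \<in> pcarrier F) \<and> \<phi> (ea_one E) = ea_one F \<and>
     (\<forall>a\<in>pcarrier E. \<forall>b\<in>pcarrier E. \<forall>c. pplus E a b = Some c \<longrightarrow> pplus F (\<phi> a) (\<phi> b) = Some (\<phi> c))"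

text \<open>Abelian po-groups are the types of class ordered_ab_group_add (the whole type is the group).\<close>

definition order_unit :: "'g::ordered_ab_group_add \<Rightarrow> bool" where
  "order_unit u \<longleftrightarrow> 0 \<le> u \<and>
     (\<forall>x. \<exists>n::nat. - (\<Sum>_<n. u) \<le> x \<and> x \<le> (\<Sum>_<n. u))"

definition pogroup_hom :: "('g::ordered_ab_group_add \<Rightarrow> 'b::ordered_ab_group_add) \<Rightarrow> bool" where
  "pogroup_hom g \<longleftrightarrow> (\<forall>x y. g (x + y) = g x + g y) \<and> mono g"

definition Gamma :: "'b::ordered_ab_group_add \<Rightarrow> 'b ea" where
  "Gamma v = \<lparr> pcarrier = {b. 0 \<le> b \<and> b \<le> v},
               pplus = (\<lambda>a b. if a + b \<le> v then Some (a + b) else None),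
               pzero = 0,
               ea_compl = (\<lambda>a. v - a),
               ea_one = v \<rparr>"

text \<open>Universal group (Gr(E),u) with eta.  Since HOL cannot quantify over types inside a
  formula, the universal property is required for all targets (B,w) in a given type 'b.\<close>
definition universal_group ::
  "('e, 'z) ea_scheme \<Rightarrow> 'g::ordered_ab_group_add \<Rightarrow> ('e \<Rightarrow> 'g) \<Rightarrow> 'b::ordered_ab_group_add itself \<Rightarrow> bool" where
  "universal_group E u \<eta> T \<longleftrightarrow>
     order_unit u \<and> ea_morphism E (Gamma u) \<eta> \<and>
     (\<forall>(w::'b) \<phi>. 0 \<le> w \<and> ea_morphism E (Gamma w) \<phi> \<longrightarrow>
        (\<exists>!g. pogroup_hom g \<and> g u = w \<and> (\<forall>x\<in>pcarrier E. g (\<eta> x) = \<phi> x)))"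

definition ea_hom_gea :: "('a, 'z) ea_scheme \<Rightarrow> ('b, 'y) ea_scheme \<Rightarrow> ('a \<Rightarrow> 'b) pa" where
  "ea_hom_gea E F =
     \<lparr> pcarrier = {f \<in> extensional (pcarrier E).
                    (\<forall>a\<in>pcarrier E. f a \<in> pcarrier F) \<and> f (pzero E) = pzero F \<and>
                    (\<forall>a\<in>pcarrier E. \<forall>b\<in>pcarrier E. \<forall>c. pplus E a b = Some c \<longrightarrow>
                        pplus F (f a) (f b) = Some (f c))},
       pplus = (\<lambda>f g. if (\<forall>a\<in>pcarrier E. pplus F (f a) (g a) \<noteq> None)
                        then Some (restrict (\<lambda>a. the (pplus F (f a) (g a))) (pcarrier E))
                        else None),
       pzero = restrict (\<lambda>_. pzero F) (pcarrier E) \<rparr>"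

definition po_hom_gea :: "'g::ordered_ab_group_add \<Rightarrow> 'b::ordered_ab_group_add \<Rightarrow> ('g \<Rightarrow> 'b) pa" where
  "po_hom_gea u v =
     \<lparr> pcarrier = {g. pogroup_hom g \<and> g u \<le> v},
       pplus = (\<lambda>g h. if g u + h u \<le> v then Some (\<lambda>x. g x + h x) else None),
       pzero = (\<lambda>_. 0) \<rparr>"

end

theory Submission
  imports Defs
begin

(* An element f of [E, Gamma(B,v)] is an effect algebra morphism into Gamma(B, f 1), because
   a + a' = 1 forces f a <= f 1.  Since f 1 <= v, the universal property of Gr(E) yields a unique
   po-group homomorphism g with g o eta = f and g u = f 1 <= v; conversely g o eta maps E into
   [0, g u] for every g with g u <= v.  Sums correspond as well: as eta 1 = u and eta <= u,
   g o eta + h o eta stays below v on E iff g u + h u <= v.  The homomorphism side is directly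
   a generalized effect algebra (positivity uses that u is an order unit), and the structure is
   transported to [E, Gamma(B,v)] along the bijection.  Naturality is associativity of
   composition. *)

lemma effect_algebraD:
  assumes "effect_algebra E"
  shows "pzero E \<in> pcarrier E" "ea_one E \<in> pcarrier E"
    "\<And>a. a \<in> pcarrier E \<Longrightarrow> ea_compl E a \<in> pcarrier E"
    "\<And>a b c. a \<in> pcarrier E \<Longrightarrow> b \<in> pcarrier E \<Longrightarrow> pplus E a b = Some c \<Longrightarrow> c \<in> pcarrier E"
    "\<And>a b. a \<in> pcarrier E \<Longrightarrow> b \<in> pcarrier E \<Longrightarrow> pplus E a b = pplus E b a"
    "\<And>a b c. a \<in> pcarrier E \<Longrightarrow> b \<in> pcarrier E \<Longrightarrow> c \<in> pcarrier E \<Longrightarrow>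
        Option.bind (pplus E a b) (\<lambda>x. pplus E x c) = Option.bind (pplus E b c) (\<lambda>y. pplus E a y)"
    "\<And>a b. a \<in> pcarrier E \<Longrightarrow> b \<in> pcarrier E \<Longrightarrow> pplus E a b = Some (ea_one E) \<longleftrightarrow> b = ea_compl E a"
    "\<And>a. a \<in> pcarrier E \<Longrightarrow> pplus E a (ea_one E) \<noteq> None \<longleftrightarrow> a = pzero E"
  using assms unfolding effect_algebra_def by blast+

lemma ea_plus_compl:
  assumes "effect_algebra E" "a \<in> pcarrier E"
  shows "pplus E a (ea_compl E a) = Some (ea_one E)"
  using effect_algebraD[OF assms(1)] assms(2) by blast

lemma ea_compl_compl:
  assumes E: "effect_algebra E" and a: "a \<in> pcarrier E"
  shows "ea_compl E (ea_compl E a) = a"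
proof -
  note D = effect_algebraD[OF E]
  have "pplus E (ea_compl E a) a = Some (ea_one E)"
    using ea_plus_compl[OF E a] D(5)[OF a D(3)[OF a]] by simp
  then show ?thesis using D(7)[OF D(3)[OF a] a] by simp
qed

lemma ea_compl_one:
  assumes E: "effect_algebra E"
  shows "ea_compl E (ea_one E) = pzero E"
proof -
  note D = effect_algebraD[OF E]
  have "pplus E (ea_compl E (ea_one E)) (ea_one E) = Some (ea_one E)"
    using ea_plus_compl[OF E D(2)] D(2,3,5) by metis
  then show ?thesis using D(2,3,8) by (metis option.distinct(1))
qed

lemma ea_plus_zero:
  assumes E: "effect_algebra E" and b: "b \<in> pcarrier E"
  shows "pplus E b (pzero E) = Some b"
proof -
  note D = effect_algebraD[OF E]
  let ?c = "ea_compl E" and ?o = "ea_one E" and ?z = "pzero E"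
  have compl_plus_zero: "pplus E (?c a) ?z = Some (?c a)" if a: "a \<in> pcarrier E" for a
  proof -
    have "Option.bind (pplus E a (?c a)) (\<lambda>x. pplus E x ?z) = Some ?o"
      using ea_plus_compl[OF E a] ea_plus_compl[OF E D(2)] ea_compl_one[OF E] by simp
    then have "Option.bind (pplus E (?c a) ?z) (pplus E a) = Some ?o"
      using D(6)[OF a D(3)[OF a] D(1)] by simp
    then obtain y where y: "pplus E (?c a) ?z = Some y" "pplus E a y = Some ?o"
      by (cases "pplus E (?c a) ?z") auto
    have "y = ?c a" using D(7)[OF a D(4)[OF D(3)[OF a] D(1) y(1)]] y(2) by blast
    then show ?thesis using y(1) by simp
  qed
  show ?thesis using compl_plus_zero[OF D(3)[OF b]] ea_compl_compl[OF E b] by simp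
qed

lemma pogroup_hom_add: "pogroup_hom g \<Longrightarrow> g (x + y) = g x + g y"
  unfolding pogroup_hom_def by blast

lemma pogroup_hom_mono: "pogroup_hom g \<Longrightarrow> x \<le> y \<Longrightarrow> g x \<le> g y"
  unfolding pogroup_hom_def mono_def by blast

lemma pogroup_hom_zero: "pogroup_hom g \<Longrightarrow> g 0 = 0"
  using pogroup_hom_add[of g 0 0] by simp

lemma pogroup_hom_nonneg: "pogroup_hom g \<Longrightarrow> 0 \<le> x \<Longrightarrow> 0 \<le> g x"
  using pogroup_hom_mono pogroup_hom_zero by metis

lemma pogroup_hom_uminus: "pogroup_hom g \<Longrightarrow> g (- x) = - g x"
  using pogroup_hom_add[of g x "- x"] pogroup_hom_zero[of g] by (metis add.right_inverse minus_unique)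

lemma pogroup_hom_sum: "pogroup_hom g \<Longrightarrow> g (\<Sum>_<(n::nat). u) = (\<Sum>_<n. g u)"
  by (induction n) (simp_all add: pogroup_hom_zero pogroup_hom_add)

lemma pogroup_hom_plus: "pogroup_hom g \<Longrightarrow> pogroup_hom h \<Longrightarrow> pogroup_hom (\<lambda>x. g x + h x)"
  unfolding pogroup_hom_def mono_def by (auto simp: algebra_simps intro: add_mono)

lemma pogroup_hom_eq_0_if_order_unit_eq_0:
  assumes u: "order_unit u" and g: "pogroup_hom g" and gu: "g u = 0"
  shows "g x = 0"
proof -
  obtain n :: nat where n: "- (\<Sum>_<n. u) \<le> x" "x \<le> (\<Sum>_<n. u)"
    using u unfolding order_unit_def by blast
  have "g (\<Sum>_<n. u) = 0" using pogroup_hom_sum[OF g] gu by simp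
  then have "- 0 \<le> g x" "g x \<le> 0"
    using pogroup_hom_mono[OF g n(1)] pogroup_hom_mono[OF g n(2)] pogroup_hom_uminus[OF g] by simp_all
  then show ?thesis by simp
qed

lemma ea_morphism_Gamma_iff:
  "ea_morphism E (Gamma w) \<phi> \<longleftrightarrow>
     (\<forall>a\<in>pcarrier E. 0 \<le> \<phi> a \<and> \<phi> a \<le> w) \<and> \<phi> (ea_one E) = w \<and>
     (\<forall>a\<in>pcarrier E. \<forall>b\<in>pcarrier E. \<forall>c. pplus E a b = Some c \<longrightarrow> \<phi> a + \<phi> b \<le> w \<and> \<phi> a + \<phi> b = \<phi> c)"
proof -
  have "pplus (Gamma w) x y = Some z \<longleftrightarrow> x + y \<le> w \<and> x + y = z" for x y z
    by (simp add: Gamma_def)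
  then show ?thesis unfolding ea_morphism_def by (simp add: Gamma_def)
qed

lemma ea_morphism_Gamma_zero:
  assumes E: "effect_algebra E" and \<phi>: "ea_morphism E (Gamma w) \<phi>"
  shows "\<phi> (pzero E) = 0"
proof -
  have "\<phi> (pzero E) + \<phi> (pzero E) = \<phi> (pzero E)"
    using \<phi> ea_plus_zero[OF E effect_algebraD(1)[OF E]] effect_algebraD(1)[OF E]
    unfolding ea_morphism_Gamma_iff by blast
  then show ?thesis by simp
qed

lemma pogroup_hom_comp_ea_morphism_Gamma:
  assumes \<eta>: "ea_morphism E (Gamma u) \<eta>" and g: "pogroup_hom g"
  shows "ea_morphism E (Gamma (g u)) (g \<circ> \<eta>)"
  unfolding ea_morphism_Gamma_iff
proof (intro conjI ballI allI impI)
  fix a assume "a \<in> pcarrier E"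
  then have "0 \<le> \<eta> a" "\<eta> a \<le> u" using \<eta> unfolding ea_morphism_Gamma_iff by auto
  then show "0 \<le> (g \<circ> \<eta>) a" "(g \<circ> \<eta>) a \<le> g u"
    using pogroup_hom_nonneg[OF g] pogroup_hom_mono[OF g] by simp_all
next
  fix a b c assume "a \<in> pcarrier E" "b \<in> pcarrier E" "pplus E a b = Some c"
  then have "\<eta> a + \<eta> b \<le> u" "\<eta> a + \<eta> b = \<eta> c" using \<eta> unfolding ea_morphism_Gamma_iff by blast+
  then show "(g \<circ> \<eta>) a + (g \<circ> \<eta>) b \<le> g u" "(g \<circ> \<eta>) a + (g \<circ> \<eta>) b = (g \<circ> \<eta>) c"
    using pogroup_hom_add[OF g, symmetric] pogroup_hom_mono[OF g] by simp_all
qed (use \<eta> in \<open>simp add: ea_morphism_Gamma_iff\<close>)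

lemma ea_hom_gea_Gamma_carrier_iff:
  "f \<in> pcarrier (ea_hom_gea E (Gamma v)) \<longleftrightarrow>
     f \<in> extensional (pcarrier E) \<and> (\<forall>a\<in>pcarrier E. 0 \<le> f a \<and> f a \<le> v) \<and> f (pzero E) = 0 \<and>
     (\<forall>a\<in>pcarrier E. \<forall>b\<in>pcarrier E. \<forall>c. pplus E a b = Some c \<longrightarrow> f a + f b \<le> v \<and> f a + f b = f c)"
proof -
  have "pplus (Gamma v) x y = Some z \<longleftrightarrow> x + y \<le> v \<and> x + y = z" for x y z
    by (simp add: Gamma_def)
  then show ?thesis unfolding ea_hom_gea_def by (simp add: Gamma_def)
qed

lemma ea_hom_gea_Gamma_plus:
  "pplus (ea_hom_gea E (Gamma v)) f g =
     (if \<forall>a\<in>pcarrier E. f a + g a \<le> v then Some (restrict (\<lambda>a. f a + g a) (pcarrier E)) else None)"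
proof (cases "\<forall>a\<in>pcarrier E. f a + g a \<le> v")
  case True
  then have "restrict (\<lambda>a. the (pplus (Gamma v) (f a) (g a))) (pcarrier E) =
      restrict (\<lambda>a. f a + g a) (pcarrier E)"
    by (intro restrict_ext) (simp add: Gamma_def)
  with True show ?thesis by (simp add: ea_hom_gea_def Gamma_def)
qed (auto simp: ea_hom_gea_def Gamma_def)

lemma ea_hom_gea_Gamma_zero: "pzero (ea_hom_gea E (Gamma v)) = restrict (\<lambda>_. 0) (pcarrier E)"
  by (simp add: ea_hom_gea_def Gamma_def)

lemma ea_morphism_Gamma_if_ea_hom_gea_Gamma:
  assumes E: "effect_algebra E" and f: "f \<in> pcarrier (ea_hom_gea E (Gamma v))"
  shows "ea_morphism E (Gamma (f (ea_one E))) f"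
proof -
  note D = effect_algebraD[OF E]
  have below_one: "f a \<le> f (ea_one E)" if a: "a \<in> pcarrier E" for a
  proof -
    have "f a + f (ea_compl E a) = f (ea_one E)" "0 \<le> f (ea_compl E a)"
      using f a D(3)[OF a] ea_plus_compl[OF E a] unfolding ea_hom_gea_Gamma_carrier_iff by blast+
    then show ?thesis by (metis add_increasing2 order_refl)
  qed
  show ?thesis
    unfolding ea_morphism_Gamma_iff
    using f below_one D(4) unfolding ea_hom_gea_Gamma_carrier_iff by metis
qed

lemma po_hom_gea_carrier_iff: "g \<in> pcarrier (po_hom_gea u v) \<longleftrightarrow> pogroup_hom g \<and> g u \<le> v"
  by (simp add: po_hom_gea_def)

lemma po_hom_gea_plus:
  "pplus (po_hom_gea u v) g h = (if g u + h u \<le> v then Some (\<lambda>x. g x + h x) else None)"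
  by (simp add: po_hom_gea_def)

lemma po_hom_gea_zero: "pzero (po_hom_gea u v) = (\<lambda>_. 0)"
  by (simp add: po_hom_gea_def)

lemma geaD:
  assumes "gea A"
  shows "pzero A \<in> pcarrier A"
    "\<And>a b c. a \<in> pcarrier A \<Longrightarrow> b \<in> pcarrier A \<Longrightarrow> pplus A a b = Some c \<Longrightarrow> c \<in> pcarrier A"
    "\<And>a b. a \<in> pcarrier A \<Longrightarrow> b \<in> pcarrier A \<Longrightarrow> pplus A a b = pplus A b a"
    "\<And>a b c. a \<in> pcarrier A \<Longrightarrow> b \<in> pcarrier A \<Longrightarrow> c \<in> pcarrier A \<Longrightarrow>
        Option.bind (pplus A a b) (\<lambda>x. pplus A x c) = Option.bind (pplus A b c) (\<lambda>y. pplus A a y)"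
    "\<And>a. a \<in> pcarrier A \<Longrightarrow> pplus A a (pzero A) = Some a"
    "\<And>a b c. a \<in> pcarrier A \<Longrightarrow> b \<in> pcarrier A \<Longrightarrow> c \<in> pcarrier A \<Longrightarrow>
        pplus A a b \<noteq> None \<Longrightarrow> pplus A a b = pplus A a c \<Longrightarrow> b = c"
    "\<And>a b. a \<in> pcarrier A \<Longrightarrow> b \<in> pcarrier A \<Longrightarrow> pplus A a b = Some (pzero A) \<Longrightarrow>
        a = pzero A \<and> b = pzero A"
  using assms unfolding gea_def by blast+

lemma gea_po_hom_gea:
  fixes u :: "'g::ordered_ab_group_add" and v :: "'b::ordered_ab_group_add"
  assumes u: "order_unit u" and v: "0 \<le> v"
  shows "gea (po_hom_gea u v)"
proof -
  let ?P = "po_hom_gea u v"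
  have unit_nonneg: "0 \<le> g u" if "g \<in> pcarrier ?P" for g :: "'g \<Rightarrow> 'b"
    using pogroup_hom_nonneg that u unfolding po_hom_gea_carrier_iff order_unit_def by blast
  show ?thesis
    unfolding gea_def
  proof (intro conjI ballI allI impI)
    show "pzero ?P \<in> pcarrier ?P"
      using v unfolding po_hom_gea_zero po_hom_gea_carrier_iff pogroup_hom_def mono_def by simp
  next
    fix f g h assume "f \<in> pcarrier ?P" "g \<in> pcarrier ?P" "pplus ?P f g = Some h"
    then show "h \<in> pcarrier ?P"
      unfolding po_hom_gea_plus po_hom_gea_carrier_iff by (auto simp: pogroup_hom_plus split: if_splits)
  next
    fix f g h assume "f \<in> pcarrier ?P" "g \<in> pcarrier ?P" "h \<in> pcarrier ?P"
    then have "0 \<le> f u" "0 \<le> g u" "0 \<le> h u" using unit_nonneg by blast+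
    then have "f u + g u \<le> f u + g u + h u" "g u + h u \<le> f u + g u + h u"
      by (simp_all add: add_increasing add_increasing2 add.assoc)
    then have "f u + (g u + h u) \<le> v \<Longrightarrow> f u + g u \<le> v" "f u + (g u + h u) \<le> v \<Longrightarrow> g u + h u \<le> v"
      by (metis add.assoc order.trans)+
    then show "Option.bind (pplus ?P f g) (\<lambda>x. pplus ?P x h) = Option.bind (pplus ?P g h) (pplus ?P f)"
      unfolding po_hom_gea_plus by (auto simp: add.assoc)
  next
    fix f g h assume "f \<in> pcarrier ?P" "g \<in> pcarrier ?P" "h \<in> pcarrier ?P"
      "pplus ?P f g \<noteq> None \<and> pplus ?P f g = pplus ?P f h"
    then show "g = h" unfolding po_hom_gea_plus by (auto split: if_splits simp: fun_eq_iff)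
  next
    fix f g assume f: "f \<in> pcarrier ?P" and g: "g \<in> pcarrier ?P"
      and "pplus ?P f g = Some (pzero ?P)"
    then have "(\<lambda>x. f x + g x) = (\<lambda>_. 0)"
      unfolding po_hom_gea_plus po_hom_gea_zero by (simp split: if_splits)
    then have "f u = 0 \<and> g u = 0"
      using add_nonneg_eq_0_iff[OF unit_nonneg[OF f] unit_nonneg[OF g]] by (metis fun_cong)
    then show "f = pzero ?P" "g = pzero ?P"
      using f g pogroup_hom_eq_0_if_order_unit_eq_0[OF u]
      unfolding po_hom_gea_zero po_hom_gea_carrier_iff by blast+
  qed (auto simp: po_hom_gea_plus po_hom_gea_zero po_hom_gea_carrier_iff add.commute)
qed

lemma gea_iso_gea:
  assumes A: "gea A" and iso: "gea_iso A B \<phi>"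
  shows "gea B"
proof -
  let ?A = "pcarrier A"
  note D = geaD[OF A]
  have B: "pcarrier B = \<phi> ` ?A" and inj: "inj_on \<phi> ?A" and zero: "pzero B = \<phi> (pzero A)"
    and plus: "\<And>a b. a \<in> ?A \<Longrightarrow> b \<in> ?A \<Longrightarrow> pplus B (\<phi> a) (\<phi> b) = map_option \<phi> (pplus A a b)"
    using iso unfolding gea_iso_def bij_betw_def by auto
  have plus_eq_iff: "pplus B (\<phi> a) (\<phi> b) = pplus B (\<phi> c) (\<phi> d) \<longleftrightarrow> pplus A a b = pplus A c d"
    if "a \<in> ?A" "b \<in> ?A" "c \<in> ?A" "d \<in> ?A" for a b c d
    unfolding plus[OF that(1,2)] plus[OF that(3,4)]
  proof
    assume "map_option \<phi> (pplus A a b) = map_option \<phi> (pplus A c d)"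
    then show "pplus A a b = pplus A c d"
    proof (rule option.inj_map_strong[rotated])
      fix x y assume x: "x \<in> set_option (pplus A a b)" and y: "y \<in> set_option (pplus A c d)"
        and "\<phi> x = \<phi> y"
      moreover have "x \<in> ?A" using x D(2)[OF that(1,2)] by (cases "pplus A a b") auto
      moreover have "y \<in> ?A" using y D(2)[OF that(3,4)] by (cases "pplus A c d") auto
      ultimately show "x = y" using inj_onD[OF inj] by blast
    qed
  qed simp
  have bind_plus_left: "Option.bind (pplus B (\<phi> a) (\<phi> b)) (\<lambda>x. pplus B x (\<phi> c)) =
      map_option \<phi> (Option.bind (pplus A a b) (\<lambda>x. pplus A x c))"
    if "a \<in> ?A" "b \<in> ?A" "c \<in> ?A" for a b c
  proof (cases "pplus A a b")
    case (Some d)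
    with that have "d \<in> ?A" using D(2) by blast
    with Some that show ?thesis by (simp add: plus)
  qed (simp add: plus that)
  have bind_plus_right: "Option.bind (pplus B (\<phi> b) (\<phi> c)) (\<lambda>y. pplus B (\<phi> a) y) =
      map_option \<phi> (Option.bind (pplus A b c) (\<lambda>y. pplus A a y))"
    if "a \<in> ?A" "b \<in> ?A" "c \<in> ?A" for a b c
  proof (cases "pplus A b c")
    case (Some d)
    with that have "d \<in> ?A" using D(2) by blast
    with Some that show ?thesis by (simp add: plus)
  qed (simp add: plus that)
  show ?thesis
    unfolding gea_def B zero Ball_image_comp comp_def
  proof (intro conjI ballI allI impI)
    show "\<phi> (pzero A) \<in> \<phi> ` ?A" using D(1) by blast
  next
    fix a b c assume a: "a \<in> ?A" and b: "b \<in> ?A" and "pplus B (\<phi> a) (\<phi> b) = Some c"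
    then obtain d where "pplus A a b = Some d" "c = \<phi> d" by (auto simp: plus)
    then show "c \<in> \<phi> ` ?A" using D(2)[OF a b] by blast
  next
    fix a b assume "a \<in> ?A" "b \<in> ?A"
    then show "pplus B (\<phi> a) (\<phi> b) = pplus B (\<phi> b) (\<phi> a)" by (simp add: plus D(3))
  next
    fix a b c assume "a \<in> ?A" "b \<in> ?A" "c \<in> ?A"
    then show "Option.bind (pplus B (\<phi> a) (\<phi> b)) (\<lambda>x. pplus B x (\<phi> c)) =
        Option.bind (pplus B (\<phi> b) (\<phi> c)) (\<lambda>y. pplus B (\<phi> a) y)"
      by (simp add: bind_plus_left bind_plus_right D(4))
  next
    fix a assume "a \<in> ?A"
    then show "pplus B (\<phi> a) (\<phi> (pzero A)) = Some (\<phi> a)" by (simp add: plus D(1,5))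
  next
    fix a b c assume abc: "a \<in> ?A" "b \<in> ?A" "c \<in> ?A"
      and "pplus B (\<phi> a) (\<phi> b) \<noteq> None \<and> pplus B (\<phi> a) (\<phi> b) = pplus B (\<phi> a) (\<phi> c)"
    then have "pplus A a b \<noteq> None" "pplus A a b = pplus A a c"
      using plus_eq_iff[of a b a c] by (auto simp: plus)
    then show "\<phi> b = \<phi> c" using D(6)[OF abc] by simp
  next
    fix a b assume ab: "a \<in> ?A" "b \<in> ?A" and "pplus B (\<phi> a) (\<phi> b) = Some (\<phi> (pzero A))"
    then have "pplus A a b = pplus A (pzero A) (pzero A)"
      using plus_eq_iff[OF ab D(1) D(1)] plus[OF D(1) D(1)] D(1,5) by simp
    then have "a = pzero A" "b = pzero A" using D(7)[OF ab] D(5)[OF D(1)] by simp_all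
    then show "\<phi> a = \<phi> (pzero A)" "\<phi> b = \<phi> (pzero A)" by simp_all
  qed
qed

lemma universal_groupD:
  assumes "universal_group E u \<eta> TYPE('b::ordered_ab_group_add)"
  shows "order_unit u" "ea_morphism E (Gamma u) \<eta>"
    "\<And>(w::'b) \<phi>. 0 \<le> w \<Longrightarrow> ea_morphism E (Gamma w) \<phi> \<Longrightarrow>
        \<exists>!g. pogroup_hom g \<and> g u = w \<and> (\<forall>x\<in>pcarrier E. g (\<eta> x) = \<phi> x)"
  using assms unfolding universal_group_def by blast+

lemma universal_group_hom_eqI:
  fixes g h :: "'g::ordered_ab_group_add \<Rightarrow> 'b::ordered_ab_group_add"
  assumes E: "effect_algebra E" and U: "universal_group E u \<eta> TYPE('b)"
    and g: "pogroup_hom g" and h: "pogroup_hom h" and eq: "\<forall>x\<in>pcarrier E. g (\<eta> x) = h (\<eta> x)"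
  shows "g = h"
proof -
  have \<eta>: "ea_morphism E (Gamma u) \<eta>" using universal_groupD(2)[OF U] .
  have "0 \<le> u" using universal_groupD(1)[OF U] unfolding order_unit_def by simp
  then have "0 \<le> g u" using pogroup_hom_nonneg[OF g] by simp
  moreover have "h u = g u"
    using eq effect_algebraD(2)[OF E] \<eta> unfolding ea_morphism_Gamma_iff by metis
  ultimately show ?thesis
    using universal_groupD(3)[OF U _ pogroup_hom_comp_ea_morphism_Gamma[OF \<eta> g]] g h eq
    by (metis comp_apply)
qed

lemma restrict_comp_in_ea_hom_gea_Gamma:
  assumes E: "effect_algebra E" and \<eta>: "ea_morphism E (Gamma u) \<eta>"
    and g: "g \<in> pcarrier (po_hom_gea u v)"
  shows "restrict (g \<circ> \<eta>) (pcarrier E) \<in> pcarrier (ea_hom_gea E (Gamma v))"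
proof -
  have hom: "pogroup_hom g" and gu: "g u \<le> v" using g unfolding po_hom_gea_carrier_iff by auto
  have g\<eta>: "ea_morphism E (Gamma (g u)) (g \<circ> \<eta>)" using pogroup_hom_comp_ea_morphism_Gamma[OF \<eta> hom] .
  show ?thesis
    unfolding ea_hom_gea_Gamma_carrier_iff
  proof (intro conjI ballI allI impI)
    fix a assume a: "a \<in> pcarrier E"
    then show "0 \<le> restrict (g \<circ> \<eta>) (pcarrier E) a" "restrict (g \<circ> \<eta>) (pcarrier E) a \<le> v"
      using g\<eta> gu unfolding ea_morphism_Gamma_iff by (auto intro: order_trans)
  next
    show "restrict (g \<circ> \<eta>) (pcarrier E) (pzero E) = 0"
      using ea_morphism_Gamma_zero[OF E g\<eta>] effect_algebraD(1)[OF E] by simp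
  next
    fix a b c assume abc: "a \<in> pcarrier E" "b \<in> pcarrier E" "pplus E a b = Some c"
    then have "(g \<circ> \<eta>) a + (g \<circ> \<eta>) b \<le> g u" "(g \<circ> \<eta>) a + (g \<circ> \<eta>) b = (g \<circ> \<eta>) c"
      using g\<eta> unfolding ea_morphism_Gamma_iff by blast+
    moreover have "c \<in> pcarrier E" using effect_algebraD(4)[OF E abc] .
    ultimately show
      "restrict (g \<circ> \<eta>) (pcarrier E) a + restrict (g \<circ> \<eta>) (pcarrier E) b \<le> v"
      "restrict (g \<circ> \<eta>) (pcarrier E) a + restrict (g \<circ> \<eta>) (pcarrier E) b =
        restrict (g \<circ> \<eta>) (pcarrier E) c"
      using abc gu by (auto intro: order_trans)
  qed simp
qed

lemma bij_betw_restrict_comp_po_hom_gea: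
  fixes E :: "('e, 'z) ea_scheme" and \<eta> :: "'e \<Rightarrow> 'g::ordered_ab_group_add"
    and v :: "'b::ordered_ab_group_add"
  assumes E: "effect_algebra E" and U: "universal_group E u \<eta> TYPE('b)"
  shows "bij_betw (\<lambda>g. restrict (g \<circ> \<eta>) (pcarrier E)) (pcarrier (po_hom_gea u v))
    (pcarrier (ea_hom_gea E (Gamma v)))" (is "bij_betw ?\<Phi> _ _")
  unfolding bij_betw_def
proof (intro conjI inj_onI subset_antisym image_subsetI subsetI)
  fix g h assume "g \<in> pcarrier (po_hom_gea u v)" "h \<in> pcarrier (po_hom_gea u v)" "?\<Phi> g = ?\<Phi> h"
  then show "g = h"
    using universal_group_hom_eqI[OF E U] unfolding po_hom_gea_carrier_iff
    by (metis comp_apply restrict_apply')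
next
  fix g assume "g \<in> pcarrier (po_hom_gea u v)"
  then show "?\<Phi> g \<in> pcarrier (ea_hom_gea E (Gamma v))"
    using restrict_comp_in_ea_hom_gea_Gamma[OF E universal_groupD(2)[OF U]] by blast
next
  fix f assume f: "f \<in> pcarrier (ea_hom_gea E (Gamma v))"
  have one: "0 \<le> f (ea_one E)" "f (ea_one E) \<le> v"
    using f effect_algebraD(2)[OF E] unfolding ea_hom_gea_Gamma_carrier_iff by auto
  obtain g where g: "pogroup_hom g" "g u = f (ea_one E)" "\<forall>x\<in>pcarrier E. g (\<eta> x) = f x"
    using universal_groupD(3)[OF U one(1) ea_morphism_Gamma_if_ea_hom_gea_Gamma[OF E f]] by blast
  have "?\<Phi> g = restrict f (pcarrier E)" using g(3) by (auto intro: restrict_ext)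
  also have "\<dots> = f" using f unfolding ea_hom_gea_Gamma_carrier_iff by (simp add: extensional_restrict)
  finally have "?\<Phi> g = f" .
  moreover have "g \<in> pcarrier (po_hom_gea u v)"
    using g(1,2) one(2) unfolding po_hom_gea_carrier_iff by simp
  ultimately show "f \<in> ?\<Phi> ` pcarrier (po_hom_gea u v)" by (rule image_eqI[OF sym])
qed

lemma ea_hom_gea_plus_restrict_comp:
  assumes E: "effect_algebra E" and \<eta>: "ea_morphism E (Gamma u) \<eta>"
    and g: "pogroup_hom g" and h: "pogroup_hom h"
  shows "pplus (ea_hom_gea E (Gamma v)) (restrict (g \<circ> \<eta>) (pcarrier E)) (restrict (h \<circ> \<eta>) (pcarrier E)) =
    map_option (\<lambda>k. restrict (k \<circ> \<eta>) (pcarrier E)) (pplus (po_hom_gea u v) g h)"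
proof -
  have bounded_iff: "(\<forall>a\<in>pcarrier E. g (\<eta> a) + h (\<eta> a) \<le> v) \<longleftrightarrow> g u + h u \<le> v"
  proof
    assume "\<forall>a\<in>pcarrier E. g (\<eta> a) + h (\<eta> a) \<le> v"
    then show "g u + h u \<le> v"
      using effect_algebraD(2)[OF E] \<eta> unfolding ea_morphism_Gamma_iff by metis
  next
    assume le: "g u + h u \<le> v"
    show "\<forall>a\<in>pcarrier E. g (\<eta> a) + h (\<eta> a) \<le> v"
    proof
      fix a assume "a \<in> pcarrier E"
      then have "\<eta> a \<le> u" using \<eta> unfolding ea_morphism_Gamma_iff by blast
      then have "g (\<eta> a) + h (\<eta> a) \<le> g u + h u"
        using pogroup_hom_mono[OF g] pogroup_hom_mono[OF h] by (intro add_mono)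
      then show "g (\<eta> a) + h (\<eta> a) \<le> v" using le by (rule order_trans)
    qed
  qed
  have "restrict (\<lambda>a. restrict (g \<circ> \<eta>) (pcarrier E) a + restrict (h \<circ> \<eta>) (pcarrier E) a) (pcarrier E) =
      restrict ((\<lambda>x. g x + h x) \<circ> \<eta>) (pcarrier E)"
    by (auto intro: restrict_ext)
  with bounded_iff show ?thesis unfolding ea_hom_gea_Gamma_plus po_hom_gea_plus by simp
qed

lemma gea_iso_restrict_comp:
  fixes E :: "('e, 'z) ea_scheme" and \<eta> :: "'e \<Rightarrow> 'g::ordered_ab_group_add"
    and v :: "'b::ordered_ab_group_add"
  assumes E: "effect_algebra E" and U: "universal_group E u \<eta> TYPE('b)"
  shows "gea_iso (po_hom_gea u v) (ea_hom_gea E (Gamma v)) (\<lambda>g. restrict (g \<circ> \<eta>) (pcarrier E))"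
  unfolding gea_iso_def
proof (intro conjI ballI)
  show "bij_betw (\<lambda>g. restrict (g \<circ> \<eta>) (pcarrier E)) (pcarrier (po_hom_gea u v))
      (pcarrier (ea_hom_gea E (Gamma v)))"
    using bij_betw_restrict_comp_po_hom_gea[OF E U] .
  show "restrict (pzero (po_hom_gea u v) \<circ> \<eta>) (pcarrier E) = pzero (ea_hom_gea E (Gamma v))"
    unfolding po_hom_gea_zero ea_hom_gea_Gamma_zero by (simp add: comp_def)
  fix g h assume "g \<in> pcarrier (po_hom_gea u v)" "h \<in> pcarrier (po_hom_gea u v)"
  then show "pplus (ea_hom_gea E (Gamma v)) (restrict (g \<circ> \<eta>) (pcarrier E)) (restrict (h \<circ> \<eta>) (pcarrier E)) =
      map_option (\<lambda>g. restrict (g \<circ> \<eta>) (pcarrier E)) (pplus (po_hom_gea u v) g h)"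
    using ea_hom_gea_plus_restrict_comp[OF E universal_groupD(2)[OF U]]
    unfolding po_hom_gea_carrier_iff by blast
qed

theorem lemma4p9:
  fixes E :: "'e ea" and u :: "'g::ordered_ab_group_add" and \<eta> :: "'e \<Rightarrow> 'g"
    and v :: "'b::ordered_ab_group_add"
  assumes "effect_algebra E"
    and "universal_group E u \<eta> TYPE('b)"
    and "order_unit v"
  shows "gea (ea_hom_gea E (Gamma v)) \<and> gea (po_hom_gea u v) \<and>
    gea_iso (po_hom_gea u v) (ea_hom_gea E (Gamma v)) (\<lambda>g. restrict (g \<circ> \<eta>) (pcarrier E)) \<and>
    (\<forall>(E'::'e2 ea) (u'::'g2::ordered_ab_group_add) \<eta>' f k.
       effect_algebra E' \<and> universal_group E' u' \<eta>' TYPE('b) \<and> ea_morphism E' E f \<and>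
       pogroup_hom k \<and> k u' = u \<and> (\<forall>x\<in>pcarrier E'. k (\<eta>' x) = \<eta> (f x)) \<longrightarrow>
       (\<forall>g\<in>pcarrier (po_hom_gea u v).
          restrict ((g \<circ> k) \<circ> \<eta>') (pcarrier E') =
          restrict (restrict (g \<circ> \<eta>) (pcarrier E) \<circ> f) (pcarrier E'))) \<and>
    (\<forall>(v'::'c::ordered_ab_group_add) h.
       order_unit v' \<and> pogroup_hom h \<and> h v = v' \<longrightarrow>
       (\<forall>g\<in>pcarrier (po_hom_gea u v).
          restrict ((h \<circ> g) \<circ> \<eta>) (pcarrier E) =
          restrict (h \<circ> restrict (g \<circ> \<eta>) (pcarrier E)) (pcarrier E)))"
proof (intro conjI allI impI ballI)
  have v: "0 \<le> v" using assms(3) unfolding order_unit_def by simp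
  show iso: "gea_iso (po_hom_gea u v) (ea_hom_gea E (Gamma v)) (\<lambda>g. restrict (g \<circ> \<eta>) (pcarrier E))"
    using gea_iso_restrict_comp[OF assms(1,2)] .
  show P: "gea (po_hom_gea u v)"
    using gea_po_hom_gea[OF universal_groupD(1)[OF assms(2)] v] .
  show "gea (ea_hom_gea E (Gamma v))"
    using gea_iso_gea[OF P iso] .
next
  fix E' :: "'e2 ea" and u' :: 'g2 and \<eta>' f k g
  assume "effect_algebra E' \<and> universal_group E' u' \<eta>' TYPE('b) \<and> ea_morphism E' E f \<and>
    pogroup_hom k \<and> k u' = u \<and> (\<forall>x\<in>pcarrier E'. k (\<eta>' x) = \<eta> (f x))"
  then show "restrict ((g \<circ> k) \<circ> \<eta>') (pcarrier E') =
      restrict (restrict (g \<circ> \<eta>) (pcarrier E) \<circ> f) (pcarrier E')"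
    unfolding ea_morphism_def by (auto intro: restrict_ext)
qed (auto intro: restrict_ext)

end
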